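(* Let $\varepsilon>0$, $\nu\in\mathcal{S}^1$, let $L\subset\mathbb{R}^2$ be a line orthogonal to $\nu$, and let $\alpha\in\{1,2,3\}$ satisfy $|\langle\hat e_\alpha,\nu^\perp\rangle|\le\tfrac12$. Then there exists a family of triangles $(T_z)_{z\in\mathbb{Z}}$ such that for every $z\in\mathbb{Z}$: $$T_z\in\mathcal{T}^+_\varepsilon(\mathbb{R}^2),\quad T_z\subset\Sigma^{\alpha,z}_\varepsilon,\quad T_z\cap L\ne\emptyset,\quad T_z\cap T_{z+1}\ne\emptyset .$$
   Context: Lattice: $\hat e_1=(1,0)$, $\hat e_2=\tfrac12(1,\sqrt3)$, $\hat e_3=\tfrac12(-1,\sqrt3)$, $\mathcal{L}=\{z_1\hat e_1+z_2\hat e_2\colon z\in\mathbb{Z}^2\}$, $\mathcal{L}^1=\{z_1(\hat e_1+\hat e_2)+z_2(\hat e_2+\hat e_3)\colon z\in\mathbb{Z}^2\}$, $\mathcal{L}^2=\mathcal{L}^1+\hat e_1$, $\mathcal{L}^3=\mathcal{L}^1+\hat e_2$. $\mathcal{T}(\mathbb{R}^2)$: closed triangles $\mathrm{conv}\{i,j,k\}$, $i,j,k\in\mathcal L$ pairwise at distance 1, labelled $i\in\mathcal{L}^1,j\in\mathcal{L}^2,k\in\mathcal{L}^3$. $\mathcal{T}^+(\mathbb{R}^2)$ is the subfamily of such triangles whose labelled vertices are positively (counterclockwise) oriented, i.e. $(j-i)\times(k-j)>0$ with $v\times w=v_1w_2-v_2w_1$ (the "upward" triangles); $\mathcal{T}^+_\varepsilon(\mathbb{R}^2)=\varepsilon\mathcal{T}^+(\mathbb{R}^2)$.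 For $w\in\mathbb{R}^2$, $w^\perp=(-w_2,w_1)$. Slices: $\Sigma^{\alpha,z}_\varepsilon=\{s\hat e_\alpha+t\hat e_\alpha^\perp\colon s\in\mathbb{R},\ t\in[\varepsilon\tfrac{\sqrt3}{2}z,\varepsilon\tfrac{\sqrt3}{2}(z+1)]\}$ for $z\in\mathbb{Z}$. *)

theory Defs
  imports "HOL-Analysis.Analysis"
begin

definition e_hat :: "nat \<Rightarrow> real \<times> real" where
  "e_hat \<alpha> = (if \<alpha> = 1 then (1, 0)
               else if \<alpha> = 2 then (1/2, sqrt 3 / 2)
               else if \<alpha> = 3 then (-1/2, sqrt 3 / 2) else (0, 0))"

definition perp :: "real \<times> real \<Rightarrow> real \<times> real" where
  "perp w = (- snd w, fst w)"

definition cross :: "real \<times> real \<Rightarrow> real \<times> real \<Rightarrow> real" where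
  "cross v w = fst v * snd w - snd v * fst w"

definition lat :: "(real \<times> real) set" where
  "lat = {of_int z1 *\<^sub>R e_hat 1 + of_int z2 *\<^sub>R e_hat 2 | z1 z2. True}"

definition lat1 :: "(real \<times> real) set" where
  "lat1 = {of_int z1 *\<^sub>R (e_hat 1 + e_hat 2) + of_int z2 *\<^sub>R (e_hat 2 + e_hat 3) | z1 z2. True}"

definition lat2 :: "(real \<times> real) set" where
  "lat2 = (\<lambda>x. x + e_hat 1) ` lat1"

definition lat3 :: "(real \<times> real) set" where
  "lat3 = (\<lambda>x. x + e_hat 2) ` lat1"

definition triangles_plus :: "(real \<times> real) set set" where
  "triangles_plus = {convex hull {i, j, k} | i j k.
      i \<in> lat1 \<and> j \<in> lat2 \<and> k \<in> lat3 \<and>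
      dist i j = 1 \<and> dist j k = 1 \<and> dist i k = 1 \<and>
      cross (j - i) (k - j) > 0}"

definition triangles_plus_eps :: "real \<Rightarrow> (real \<times> real) set set" where
  "triangles_plus_eps \<epsilon> = (\<lambda>T. (\<lambda>x. \<epsilon> *\<^sub>R x) ` T) ` triangles_plus"

definition slice :: "real \<Rightarrow> nat \<Rightarrow> int \<Rightarrow> (real \<times> real) set" where
  "slice \<epsilon> \<alpha> z = {s *\<^sub>R e_hat \<alpha> + t *\<^sub>R perp (e_hat \<alpha>) | s t.
      \<epsilon> * sqrt 3 / 2 * of_int z \<le> t \<and> t \<le> \<epsilon> * sqrt 3 / 2 * (of_int z + 1)}"

end

theory Submission
  imports Defs
begin

(*
  Measure positions against a direction u in {e1, e3, -e2} in "lattice coordinates"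
  a u + b v, with v the rotation of u by 60 degrees: row b is the line <x, u^perp> = b sqrt 3 / 2,
  and the upward triangle with vertices a u + b v, (a+1) u + b v, a u + (b+1) v has its base on
  row b and its apex on row b+1.  The slope hypothesis says that L is steep with respect to the
  rows: going up one row decreases the lattice coordinate a of its crossing point by an amount
  in [0, 1].  Choosing in every row the triangle whose base contains the crossing point, the
  base index stays the same or drops by one, so the apex of each triangle is a vertex of the
  next one.  The direction e2 is reduced to -e2 by reversing the order of the rows.
*)

lemma inner_perp_self [simp]: "inner u (perp u) = 0"
  by (cases u) (simp add: perp_def)

lemma inner_perp_perp [simp]: "inner (perp u) (perp v) = inner u v"
  by (cases u, cases v) (simp add: perp_def)

lemma inner_perp_left: "inner (perp u) v = - inner u (perp v)"
  by (cases u, cases v) (simp add: perp_def)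

lemma perp_uminus [simp]: "perp (- u) = - perp u"
  by (simp add: perp_def)

lemma inner_perp_sq_add: "(inner u v)\<^sup>2 + (inner u (perp v))\<^sup>2 = (norm u * norm v)\<^sup>2"
  by (cases u, cases v) (simp add: perp_def norm_Pair power2_eq_square algebra_simps)

lemma unit_decomposition:
  assumes "norm u = 1"
  shows "x = inner x u *\<^sub>R u + inner x (perp u) *\<^sub>R perp u"
proof -
  obtain x1 x2 u1 u2 where xu: "x = (x1, x2)" "u = (u1, u2)" by fastforce
  have u: "u1\<^sup>2 + u2\<^sup>2 = 1" using assms xu by (simp add: norm_Pair)
  have "x1 = x1 * (u1\<^sup>2 + u2\<^sup>2)" "x2 = x2 * (u1\<^sup>2 + u2\<^sup>2)" using u by simp_all
  then have "x1 = (x1 * u1 + x2 * u2) * u1 + (x2 * u1 - x1 * u2) * - u2"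
    "x2 = (x1 * u1 + x2 * u2) * u2 + (x2 * u1 - x1 * u2) * u1"
    by (simp_all add: algebra_simps power2_eq_square)
  then show ?thesis using xu by (simp add: perp_def)
qed

lemma norm_e_hat: "\<alpha> \<in> {1, 2, 3} \<Longrightarrow> norm (e_hat \<alpha>) = 1"
  by (auto simp: e_hat_def norm_Pair power_divide)

lemma line_slope_bound:
  assumes "norm u = 1" "norm \<nu> = 1" "\<bar>inner u (perp \<nu>)\<bar> \<le> 1/2"
  shows "inner u \<nu> \<noteq> 0" "\<bar>sqrt 3 / 2 * inner (perp u) \<nu> / inner u \<nu>\<bar> \<le> 1/2"
proof -
  define U where "U = inner u \<nu>"
  define W where "W = inner u (perp \<nu>)"
  have "W\<^sup>2 \<le> 1/4" using assms(3) abs_le_square_iff[of W "1/2"] by (simp add: W_def power2_eq_square)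
  moreover have "U\<^sup>2 + W\<^sup>2 = 1" using inner_perp_sq_add[of u \<nu>] assms by (simp add: U_def W_def)
  ultimately have W_U: "3 * W\<^sup>2 \<le> U\<^sup>2" and "U\<^sup>2 > 0" by linarith+
  then show "inner u \<nu> \<noteq> 0" by (auto simp: U_def)
  from \<open>U\<^sup>2 > 0\<close> have "(sqrt 3 / 2 * W / U)\<^sup>2 \<le> (1/2)\<^sup>2"
    using W_U by (simp add: power_divide power_mult_distrib divide_le_eq)
  then have "\<bar>sqrt 3 / 2 * W / U\<bar> \<le> 1/2"
    using abs_le_square_iff[of "sqrt 3 / 2 * W / U" "1/2"] by simp
  then show "\<bar>sqrt 3 / 2 * inner (perp u) \<nu> / inner u \<nu>\<bar> \<le> 1/2"
    by (simp add: U_def W_def inner_perp_left)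
qed

definition lattice_point :: "real \<times> real \<Rightarrow> int \<Rightarrow> int \<Rightarrow> real \<times> real" where
  "lattice_point u a b = of_int a *\<^sub>R u + of_int b *\<^sub>R ((1/2) *\<^sub>R u + (sqrt 3 / 2) *\<^sub>R perp u)"

definition unit_triangle :: "real \<times> real \<Rightarrow> int \<Rightarrow> int \<Rightarrow> (real \<times> real) set" where
  "unit_triangle u a b =
     convex hull {lattice_point u a b, lattice_point u (a + 1) b, lattice_point u a (b + 1)}"

lemma lattice_point_e1: "lattice_point (e_hat 1) a b = (of_int a + of_int b / 2, of_int b * sqrt 3 / 2)"
  by (simp add: lattice_point_def e_hat_def perp_def)

lemma unit_triangle_e3: "unit_triangle (e_hat 3) a b = unit_triangle (e_hat 1) (- a - b - 1) a"
proof -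
  have "lattice_point (e_hat 3) a b = lattice_point (e_hat 1) (- a - b - 1 + 1) a"
    "lattice_point (e_hat 3) (a + 1) b = lattice_point (e_hat 1) (- a - b - 1) (a + 1)"
    "lattice_point (e_hat 3) a (b + 1) = lattice_point (e_hat 1) (- a - b - 1) a"
    by (simp_all add: lattice_point_def e_hat_def perp_def algebra_simps)
  then show ?thesis by (simp add: unit_triangle_def insert_commute)
qed

lemma unit_triangle_minus_e2: "unit_triangle (- e_hat 2) a b = unit_triangle (e_hat 1) b (- a - b - 1)"
proof -
  have "lattice_point (- e_hat 2) a b = lattice_point (e_hat 1) b (- a - b - 1 + 1)"
    "lattice_point (- e_hat 2) (a + 1) b = lattice_point (e_hat 1) b (- a - b - 1)"
    "lattice_point (- e_hat 2) a (b + 1) = lattice_point (e_hat 1) (b + 1) (- a - b - 1)"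
    by (simp_all add: lattice_point_def e_hat_def perp_def field_simps)
  then show ?thesis by (simp add: unit_triangle_def insert_commute)
qed

lemma lattice_point_lat1:
  assumes "3 dvd b - a"
  shows "lattice_point (e_hat 1) a b \<in> lat1"
proof -
  obtain q where "b - a = 3 * q" using assms by (elim dvdE)
  then have q: "b = a + 3 * q" by simp
  have "lattice_point (e_hat 1) a b = of_int (a + q) *\<^sub>R (e_hat 1 + e_hat 2) + of_int q *\<^sub>R (e_hat 2 + e_hat 3)"
    unfolding lattice_point_e1 by (simp add: e_hat_def q field_simps)
  then show ?thesis unfolding lat1_def by blast
qed

lemma lattice_point_lat2:
  assumes "3 dvd b - a + 1"
  shows "lattice_point (e_hat 1) a b \<in> lat2"
proof -
  have "lattice_point (e_hat 1) (a - 1) b \<in> lat1" using assms by (intro lattice_point_lat1) presburger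
  moreover have "lattice_point (e_hat 1) a b = lattice_point (e_hat 1) (a - 1) b + e_hat 1"
    unfolding lattice_point_e1 by (simp add: e_hat_def)
  ultimately show ?thesis unfolding lat2_def by blast
qed

lemma lattice_point_lat3:
  assumes "3 dvd b - a - 1"
  shows "lattice_point (e_hat 1) a b \<in> lat3"
proof -
  have "lattice_point (e_hat 1) a (b - 1) \<in> lat1" using assms by (intro lattice_point_lat1) presburger
  moreover have "lattice_point (e_hat 1) a b = lattice_point (e_hat 1) a (b - 1) + e_hat 2"
    unfolding lattice_point_e1 by (simp add: e_hat_def field_simps)
  ultimately show ?thesis unfolding lat3_def by blast
qed

lemma triangles_plusI:
  assumes "i \<in> lat1" "j \<in> lat2" "k \<in> lat3"
    and "norm (j - i) = 1" "norm (k - j) = 1" "norm (i - k) = 1" "cross (j - i) (k - j) > 0"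
  shows "convex hull {i, j, k} \<in> triangles_plus"
  unfolding triangles_plus_def using assms
  by (intro CollectI exI[of _ i] exI[of _ j] exI[of _ k]) (simp add: dist_norm norm_minus_commute)

lemma unit_triangle_e1_in_triangles_plus: "unit_triangle (e_hat 1) a b \<in> triangles_plus"
proof -
  define x y w where "x = lattice_point (e_hat 1) a b" "y = lattice_point (e_hat 1) (a + 1) b"
    "w = lattice_point (e_hat 1) a (b + 1)"
  have edges: "y - x = (1, 0)" "w - y = (- 1/2, sqrt 3 / 2)" "x - w = (- 1/2, - sqrt 3 / 2)"
    unfolding x_y_w_def lattice_point_e1 by (simp_all add: field_simps)
  have "(sqrt 3 / 2)\<^sup>2 = (3/4 :: real)" by (simp add: power_divide)
  then have norms: "norm (y - x) = 1" "norm (w - y) = 1" "norm (x - w) = 1"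
    unfolding edges by (simp_all add: norm_Pair power_divide)
  have crosses: "cross (y - x) (w - y) > 0" "cross (w - y) (x - w) > 0" "cross (x - w) (y - x) > 0"
    unfolding edges by (simp_all add: cross_def)
  have triangle: "unit_triangle (e_hat 1) a b = convex hull {x, y, w}"
    by (simp add: unit_triangle_def x_y_w_def)
  have "3 dvd b - a \<or> 3 dvd b - a - 1 \<or> 3 dvd b - a - 2" by presburger
  then show ?thesis
  proof (elim disjE)
    assume h: "3 dvd b - a"
    have "x \<in> lat1" "y \<in> lat2" "w \<in> lat3" unfolding x_y_w_def
      by (intro lattice_point_lat1 lattice_point_lat2 lattice_point_lat3; use h in presburger)+
    then show ?thesis unfolding triangle using norms crosses by (intro triangles_plusI)
  next
    assume h: "3 dvd b - a - 1"
    have "y \<in> lat1" "w \<in> lat2" "x \<in> lat3" unfolding x_y_w_def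
      by (intro lattice_point_lat1 lattice_point_lat2 lattice_point_lat3; use h in presburger)+
    then have "convex hull {y, w, x} \<in> triangles_plus" using norms crosses by (intro triangles_plusI)
    then show ?thesis unfolding triangle by (simp add: insert_commute)
  next
    assume h: "3 dvd b - a - 2"
    have "w \<in> lat1" "x \<in> lat2" "y \<in> lat3" unfolding x_y_w_def
      by (intro lattice_point_lat1 lattice_point_lat2 lattice_point_lat3; use h in presburger)+
    then have "convex hull {w, x, y} \<in> triangles_plus" using norms crosses by (intro triangles_plusI)
    then show ?thesis unfolding triangle by (simp add: insert_commute)
  qed
qed

lemma unit_triangle_in_triangles_plus:
  "u \<in> {e_hat 1, e_hat 3, - e_hat 2} \<Longrightarrow> unit_triangle u a b \<in> triangles_plus"
  using unit_triangle_e1_in_triangles_plus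
  by (auto simp only: unit_triangle_e3 unit_triangle_minus_e2 insert_iff empty_iff)

definition strip :: "real \<times> real \<Rightarrow> real \<Rightarrow> int \<Rightarrow> (real \<times> real) set" where
  "strip u \<epsilon> z = {x. \<epsilon> * sqrt 3 / 2 * of_int z \<le> inner x (perp u) \<and>
                      inner x (perp u) \<le> \<epsilon> * sqrt 3 / 2 * (of_int z + 1)}"

lemma convex_strip: "convex (strip u \<epsilon> z)"
proof -
  have "strip u \<epsilon> z = {x. inner (perp u) x \<ge> \<epsilon> * sqrt 3 / 2 * of_int z} \<inter>
                      {x. inner (perp u) x \<le> \<epsilon> * sqrt 3 / 2 * (of_int z + 1)}"
    by (auto simp: strip_def inner_commute)
  then show ?thesis by (metis convex_Int convex_halfspace_ge convex_halfspace_le)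
qed

lemma inner_lattice_point_perp:
  "norm u = 1 \<Longrightarrow> inner (lattice_point u a b) (perp u) = of_int b * sqrt 3 / 2"
  by (simp add: lattice_point_def inner_add_left norm_eq_1)

lemma unit_triangle_subset_strip: "norm u = 1 \<Longrightarrow> unit_triangle u a b \<subseteq> strip u 1 b"
  unfolding unit_triangle_def
  by (intro hull_minimal convex_strip) (simp add: strip_def inner_lattice_point_perp)

lemma scaleR_strip: "\<epsilon> > 0 \<Longrightarrow> x \<in> strip u 1 z \<Longrightarrow> \<epsilon> *\<^sub>R x \<in> strip u \<epsilon> z"
  by (auto simp: strip_def mult.assoc intro!: mult_left_mono)

lemma strip_uminus: "strip (- u) \<epsilon> z = strip u \<epsilon> (- z - 1)"
  by (auto simp: strip_def algebra_simps)

lemma strip_subset_slice: "\<alpha> \<in> {1, 2, 3} \<Longrightarrow> strip (e_hat \<alpha>) \<epsilon> z \<subseteq> slice \<epsilon> \<alpha> z"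
  using unit_decomposition[OF norm_e_hat] unfolding strip_def slice_def by blast

text \<open>The line \<open>{x. inner x \<nu> = c}\<close> meets row \<open>b\<close> in the point
  \<open>lattice_point u 0 b + row_crossing u \<nu> c b *\<^sub>R u\<close>.\<close>

definition row_crossing :: "real \<times> real \<Rightarrow> real \<times> real \<Rightarrow> real \<Rightarrow> int \<Rightarrow> real" where
  "row_crossing u \<nu> c b = (c - of_int b * sqrt 3 / 2 * inner (perp u) \<nu>) / inner u \<nu> - of_int b / 2"

lemma unit_triangle_meets_line:
  assumes "inner u \<nu> \<noteq> 0" "of_int a \<le> row_crossing u \<nu> c b" "row_crossing u \<nu> c b \<le> of_int a + 1"
  shows "unit_triangle u a b \<inter> {x. inner x \<nu> = c} \<noteq> {}"
proof -
  define t where "t = row_crossing u \<nu> c b - of_int a"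
  define p where "p = (1 - t) *\<^sub>R lattice_point u a b + t *\<^sub>R lattice_point u (a + 1) b"
  have "p \<in> closed_segment (lattice_point u a b) (lattice_point u (a + 1) b)"
    unfolding p_def in_segment(1) by (rule exI[of _ t]) (use assms(2,3) t_def in auto)
  moreover have "closed_segment (lattice_point u a b) (lattice_point u (a + 1) b) \<subseteq> unit_triangle u a b"
    unfolding unit_triangle_def segment_convex_hull by (rule hull_mono) auto
  ultimately have "p \<in> unit_triangle u a b" by blast
  moreover have "inner p \<nu> = c"
    using assms(1) by (simp add: p_def t_def row_crossing_def lattice_point_def inner_add_left field_simps)
  ultimately show ?thesis by blast
qed

lemma row_crossing_succ:
  "row_crossing u \<nu> c (b + 1) = row_crossing u \<nu> c b - (sqrt 3 / 2 * inner (perp u) \<nu> / inner u \<nu> + 1/2)"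
  by (simp add: row_crossing_def add_divide_distrib diff_divide_distrib algebra_simps)

lemma floor_diff_cases:
  fixes x \<delta> :: real
  assumes "0 \<le> \<delta>" "\<delta> \<le> 1"
  shows "\<lfloor>x - \<delta>\<rfloor> = \<lfloor>x\<rfloor> \<or> \<lfloor>x - \<delta>\<rfloor> = \<lfloor>x\<rfloor> - 1"
proof -
  have "\<lfloor>x - 1\<rfloor> \<le> \<lfloor>x - \<delta>\<rfloor>" "\<lfloor>x - \<delta>\<rfloor> \<le> \<lfloor>x\<rfloor>"
    using assms by (intro floor_mono; simp)+
  then show ?thesis by linarith
qed

lemma unit_triangles_adjacent:
  assumes "a' = a \<or> a' = a - 1"
  shows "unit_triangle u a b \<inter> unit_triangle u a' (b + 1) \<noteq> {}"
proof -
  have "lattice_point u a (b + 1) \<in> unit_triangle u a b"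
    unfolding unit_triangle_def by (simp add: hull_inc)
  moreover have "lattice_point u a (b + 1) \<in> unit_triangle u a' (b + 1)"
    using assms unfolding unit_triangle_def by (auto simp: hull_inc)
  ultimately show ?thesis by blast
qed

lemma unit_triangles_along_line:
  assumes "inner u \<nu> \<noteq> 0" "\<bar>sqrt 3 / 2 * inner (perp u) \<nu> / inner u \<nu>\<bar> \<le> 1/2"
  shows "\<exists>m. \<forall>b. unit_triangle u (m b) b \<inter> {x. inner x \<nu> = c} \<noteq> {} \<and>
                 unit_triangle u (m b) b \<inter> unit_triangle u (m (b + 1)) (b + 1) \<noteq> {}"
proof (intro exI[of _ "\<lambda>b. \<lfloor>row_crossing u \<nu> c b\<rfloor>"] allI conjI)
  fix b
  show "unit_triangle u \<lfloor>row_crossing u \<nu> c b\<rfloor> b \<inter> {x. inner x \<nu> = c} \<noteq> {}"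
    using assms(1) by (rule unit_triangle_meets_line) linarith+
  have "\<lfloor>row_crossing u \<nu> c (b + 1)\<rfloor> = \<lfloor>row_crossing u \<nu> c b\<rfloor> \<or>
        \<lfloor>row_crossing u \<nu> c (b + 1)\<rfloor> = \<lfloor>row_crossing u \<nu> c b\<rfloor> - 1"
    unfolding row_crossing_succ using assms(2) by (intro floor_diff_cases) linarith+
  then show "unit_triangle u \<lfloor>row_crossing u \<nu> c b\<rfloor> b \<inter>
             unit_triangle u \<lfloor>row_crossing u \<nu> c (b + 1)\<rfloor> (b + 1) \<noteq> {}"
    by (rule unit_triangles_adjacent)
qed

definition triangle_chain ::
    "real \<Rightarrow> real \<times> real \<Rightarrow> (real \<times> real) set \<Rightarrow> (int \<Rightarrow> (real \<times> real) set) \<Rightarrow> bool" where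
  "triangle_chain \<epsilon> u L T \<longleftrightarrow> (\<forall>z. T z \<in> triangles_plus_eps \<epsilon> \<and> T z \<subseteq> strip u \<epsilon> z \<and>
                                  T z \<inter> L \<noteq> {} \<and> T z \<inter> T (z + 1) \<noteq> {})"

lemma triangle_chain_uminus:
  assumes "triangle_chain \<epsilon> (- u) L T"
  shows "triangle_chain \<epsilon> u L (\<lambda>z. T (- z - 1))"
  unfolding triangle_chain_def
proof (intro allI conjI)
  fix z
  show "T (- z - 1) \<in> triangles_plus_eps \<epsilon>" "T (- z - 1) \<inter> L \<noteq> {}"
    using assms unfolding triangle_chain_def by blast+
  have "T (- z - 1) \<subseteq> strip (- u) \<epsilon> (- z - 1)"
    using assms unfolding triangle_chain_def by blast
  then show "T (- z - 1) \<subseteq> strip u \<epsilon> z" by (simp add: strip_uminus)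
  have "T (- (z + 1) - 1) \<inter> T (- (z + 1) - 1 + 1) \<noteq> {}"
    using assms unfolding triangle_chain_def by blast
  moreover have "- (z + 1) - 1 + 1 = - z - 1" by simp
  ultimately show "T (- z - 1) \<inter> T (- (z + 1) - 1) \<noteq> {}"
    by (metis Int_commute)
qed

lemma triangle_chain_exists:
  assumes "\<epsilon> > 0" "u \<in> {e_hat 1, e_hat 3, - e_hat 2}" "norm \<nu> = 1" "\<bar>inner u (perp \<nu>)\<bar> \<le> 1/2"
  shows "\<exists>T. triangle_chain \<epsilon> u {x. inner x \<nu> = c} T"
proof -
  have "norm u = 1" using assms(2) norm_e_hat[of 1] norm_e_hat[of 2] norm_e_hat[of 3] by auto
  then obtain m where m: "\<And>b. unit_triangle u (m b) b \<inter> {x. inner x \<nu> = c / \<epsilon>} \<noteq> {}"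
    "\<And>b. unit_triangle u (m b) b \<inter> unit_triangle u (m (b + 1)) (b + 1) \<noteq> {}"
    using unit_triangles_along_line line_slope_bound[OF _ assms(3,4)] by meson
  define T where "T z = (\<lambda>x. \<epsilon> *\<^sub>R x) ` unit_triangle u (m z) z" for z
  have "T z \<in> triangles_plus_eps \<epsilon>" for z
    unfolding T_def triangles_plus_eps_def using unit_triangle_in_triangles_plus[OF assms(2)] by blast
  moreover have "T z \<subseteq> strip u \<epsilon> z" for z
    unfolding T_def using unit_triangle_subset_strip[OF \<open>norm u = 1\<close>] scaleR_strip[OF assms(1)] by blast
  moreover have "T z \<inter> {x. inner x \<nu> = c} \<noteq> {}" for z
  proof -
    obtain p where "p \<in> unit_triangle u (m z) z" "inner p \<nu> = c / \<epsilon>" using m(1)[of z] by blast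
    then have "\<epsilon> *\<^sub>R p \<in> T z \<inter> {x. inner x \<nu> = c}" using assms(1) by (simp add: T_def)
    then show ?thesis by blast
  qed
  moreover have "T z \<inter> T (z + 1) \<noteq> {}" for z
    using m(2)[of z] unfolding T_def by blast
  ultimately show ?thesis unfolding triangle_chain_def by blast
qed

theorem lemma4p6:
  fixes \<epsilon> :: real and \<nu> :: "real \<times> real" and L :: "(real \<times> real) set" and \<alpha> :: nat
  assumes "\<epsilon> > 0"
    and "norm \<nu> = 1"
    and "\<exists>c. L = {x. inner x \<nu> = c}"
    and "\<alpha> \<in> {1, 2, 3}"
    and "\<bar>inner (e_hat \<alpha>) (perp \<nu>)\<bar> \<le> 1/2"
  shows "\<exists>T :: int \<Rightarrow> (real \<times> real) set. \<forall>z. T z \<in> triangles_plus_eps \<epsilon> \<and>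
           T z \<subseteq> slice \<epsilon> \<alpha> z \<and> T z \<inter> L \<noteq> {} \<and> T z \<inter> T (z + 1) \<noteq> {}"
proof -
  obtain c where L: "L = {x. inner x \<nu> = c}" using assms(3) by blast
  have "\<exists>T. triangle_chain \<epsilon> (e_hat \<alpha>) L T"
  proof (cases "\<alpha> = 2")
    \<comment> \<open>Upward triangles stand on a side parallel to \<open>e_hat 1\<close>, \<open>e_hat 3\<close> or \<open>- e_hat 2\<close>,
       never on one oriented like \<open>e_hat 2\<close>.\<close>
    case True
    have "\<bar>inner (- e_hat 2) (perp \<nu>)\<bar> \<le> 1/2" using assms(5) True by simp
    then obtain T where "triangle_chain \<epsilon> (- e_hat 2) L T"
      using triangle_chain_exists[OF assms(1) _ assms(2)] L by blast
    then show ?thesis using True triangle_chain_uminus by blast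
  next
    case False
    then have "e_hat \<alpha> \<in> {e_hat 1, e_hat 3, - e_hat 2}" using assms(4) by auto
    then show ?thesis using triangle_chain_exists[OF assms(1) _ assms(2,5)] L by blast
  qed
  then show ?thesis
    using strip_subset_slice[OF assms(4)] unfolding triangle_chain_def by (meson subset_trans)
qed

end
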